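(* Let $k$ be a field of characteristic zero and let $N$ be a normal subgroup of $GA_3$ containing all diagonal automorphisms of $k^3$. Then the Nagata automorphism $$F=\big(X-2(Y^2+XZ)Y-(Y^2+XZ)^2Z,\ Y+(Y^2+XZ)Z,\ Z\big)$$ belongs to $N$.
   Context: $GA_3$ is the group (under composition) of polynomial automorphisms $G=(G_1,G_2,G_3)$ of $k^3$, with $G_i\in k[X,Y,Z]$. An automorphism is diagonal if it has the form $(c_1X,c_2Y,c_3Z)$ with $c_1,c_2,c_3\in k\setminus\{0\}$. *)

theory Defs
  imports "HOL-Computational_Algebra.Polynomial" "HOL-Algebra.Group" "HOL-Algebra.Coset"
begin

text \<open>The polynomial ring k[X,Y,Z] is represented as k[X][Y][Z], i.e. the type
  'a poly poly poly: the innermost variable is X, the middle one Y, the outermost Z.\<close>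

type_synonym 'a mpoly3 = "'a poly poly poly"

definition const3 :: "'a::comm_ring_1 \<Rightarrow> 'a mpoly3" where
  "const3 a = [:[:[:a:]:]:]"

definition varX :: "'a::comm_ring_1 mpoly3" where
  "varX = [:[:[:0, 1:]:]:]"

definition varY :: "'a::comm_ring_1 mpoly3" where
  "varY = [:[:0, 1:]:]"

definition varZ :: "'a::comm_ring_1 mpoly3" where
  "varZ = [:0, 1:]"

definition subst3 :: "'a::comm_ring_1 mpoly3 \<Rightarrow> 'a mpoly3 \<Rightarrow> 'a mpoly3 \<Rightarrow> 'a mpoly3 \<Rightarrow> 'a mpoly3" where
  "subst3 p q1 q2 q3 =
     poly (map_poly (\<lambda>c. poly (map_poly (\<lambda>b. poly (map_poly const3 b) q1) c) q2) p) q3"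

type_synonym 'a pmap3 = "'a mpoly3 \<times> 'a mpoly3 \<times> 'a mpoly3"

definition comp3 :: "'a::comm_ring_1 pmap3 \<Rightarrow> 'a pmap3 \<Rightarrow> 'a pmap3" where
  "comp3 G H = (case G of (G1, G2, G3) \<Rightarrow> case H of (H1, H2, H3) \<Rightarrow>
      (subst3 G1 H1 H2 H3, subst3 G2 H1 H2 H3, subst3 G3 H1 H2 H3))"

definition id3 :: "'a::comm_ring_1 pmap3" where
  "id3 = (varX, varY, varZ)"

definition GA3 :: "'a::comm_ring_1 pmap3 monoid" where
  "GA3 = \<lparr> carrier = {G. \<exists>H. comp3 G H = id3 \<and> comp3 H G = id3},
           mult = comp3, one = id3 \<rparr>"

definition diagonal3 :: "'a::comm_ring_1 pmap3 \<Rightarrow> bool" where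
  "diagonal3 G \<longleftrightarrow> (\<exists>c1 c2 c3. c1 \<noteq> 0 \<and> c2 \<noteq> 0 \<and> c3 \<noteq> 0 \<and>
      G = (const3 c1 * varX, const3 c2 * varY, const3 c3 * varZ))"

definition nagata :: "'a::comm_ring_1 pmap3" where
  "nagata = (let D = varY ^ 2 + varX * varZ in
     (varX - 2 * D * varY - D ^ 2 * varZ, varY + D * varZ, varZ))"

end

theory Submission
  imports Defs
begin

text \<open>The Nagata automorphism is the time-one map F 1 of the one-parameter group
  F t = exp (t \<Delta>), where \<Delta> = (Y^2 + XZ)(Z d/dY - 2Y d/dX) is a locally nilpotent
  derivation annihilating Y^2 + XZ; hence F s \<circ> F t = F (s + t). The diagonal reflection
  \<sigma> = (X, -Y, Z) conjugates F t into F (-t), so the commutator of \<sigma> \<in> N with F (-1/2) is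
  F (1/2) \<circ> F (1/2) = F 1, and it lies in the normal subgroup N.\<close>

locale comm_ring_hom =
  fixes f :: "'a::comm_ring_1 \<Rightarrow> 'b::comm_ring_1"
  assumes hom_add: "f (a + b) = f a + f b"
    and hom_mult: "f (a * b) = f a * f b"
    and hom_one: "f 1 = 1"
begin

lemma hom_zero: "f 0 = 0"
  using hom_add[of 0 0] by simp

lemma hom_uminus: "f (- a) = - f a"
  using hom_add[of "- a" a] by (simp add: hom_zero eq_neg_iff_add_eq_0)

lemma hom_diff: "f (a - b) = f a - f b"
  using hom_add[of a "- b"] by (simp add: hom_uminus)

lemma hom_power: "f (a ^ n) = f a ^ n"
  by (induction n) (simp_all add: hom_mult hom_one)

lemma hom_of_nat: "f (of_nat n) = of_nat n"
  by (induction n) (simp_all add: hom_add hom_one hom_zero)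

lemma hom_numeral: "f (numeral n) = numeral n"
  using hom_of_nat[of "numeral n"] by simp

lemma hom_sum: "f (sum g A) = (\<Sum>x\<in>A. f (g x))"
  by (induction A rule: infinite_finite_induct) (simp_all add: hom_add hom_zero)

lemmas hom_simps = hom_add hom_mult hom_one hom_zero hom_uminus hom_diff hom_power hom_numeral

lemma map_poly_hom: "comm_ring_hom (map_poly f)"
proof
  show "map_poly f (p + q) = map_poly f p + map_poly f q" for p q
    by (rule poly_eqI) (simp add: coeff_map_poly hom_zero hom_add)
  show "map_poly f (p * q) = map_poly f p * map_poly f q" for p q
    by (rule poly_eqI) (simp add: coeff_map_poly hom_zero coeff_mult hom_sum hom_mult)
  show "map_poly f 1 = 1"
    by (simp add: hom_one)
qed

lemma eval_map_poly_hom: "comm_ring_hom (\<lambda>p. poly (map_poly f p) x)"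
proof -
  interpret map_poly: comm_ring_hom "map_poly f" by (rule map_poly_hom)
  show ?thesis
    by unfold_locales (simp_all add: map_poly.hom_simps)
qed

end

interpretation const3: comm_ring_hom const3
  by unfold_locales (simp_all add: const3_def pCons_one)

interpretation subst3: comm_ring_hom "\<lambda>p. subst3 p q1 q2 q3" for q1 q2 q3
  unfolding subst3_def
  by (intro comm_ring_hom.eval_map_poly_hom const3.eval_map_poly_hom)


lemma subst3_var_simps [simp]:
  "subst3 varX q1 q2 q3 = q1" "subst3 varY q1 q2 q3 = q2" "subst3 varZ q1 q2 q3 = q3"
  "subst3 (const3 c) q1 q2 q3 = const3 c"
  by (simp_all add: subst3_def varX_def varY_def varZ_def const3_def map_poly_pCons pCons_one)

definition nagata_flow :: "'a::comm_ring_1 \<Rightarrow> 'a pmap3" where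
  "nagata_flow t = (let D = varY ^ 2 + varX * varZ; c = const3 t in
     (varX - 2 * c * D * varY - c ^ 2 * D ^ 2 * varZ, varY + c * D * varZ, varZ))"

lemma comp3_nagata_flow:
  "comp3 (nagata_flow t) (H1, H2, H3) = (let D = H2 ^ 2 + H1 * H3; c = const3 t in
     (H1 - 2 * c * D * H2 - c ^ 2 * D ^ 2 * H3, H2 + c * D * H3, H3))"
  by (simp add: nagata_flow_def comp3_def Let_def subst3.hom_simps)

lemma nagata_invariant:
  fixes X Y Z c :: "'a::comm_ring_1"
  assumes "D = Y ^ 2 + X * Z"
  shows "(Y + c * D * Z) ^ 2 + (X - 2 * c * D * Y - c ^ 2 * D ^ 2 * Z) * Z = D"
  using assms by (simp add: algebra_simps power2_eq_square)

lemma nagata_flow_add: "comp3 (nagata_flow s) (nagata_flow t) = nagata_flow (s + t)"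
proof -
  define D :: "'a mpoly3" where "D = varY ^ 2 + varX * varZ"
  have flow: "nagata_flow u = (varX - 2 * const3 u * D * varY - const3 u ^ 2 * D ^ 2 * varZ,
      varY + const3 u * D * varZ, varZ)" for u
    by (simp add: nagata_flow_def D_def Let_def)
  show ?thesis
    unfolding flow[of t] comp3_nagata_flow Let_def nagata_invariant[OF D_def]
    by (simp add: flow const3.hom_add algebra_simps power2_eq_square)
qed

definition reflectY :: "'a::comm_ring_1 pmap3" where
  "reflectY = (varX, - varY, varZ)"

lemma reflectY_conj_nagata_flow:
  "comp3 (comp3 reflectY (nagata_flow t)) reflectY = nagata_flow (- t)"
  by (simp add: reflectY_def nagata_flow_def comp3_def Let_def subst3.hom_simps const3.hom_uminus)

lemma reflectY_involution: "comp3 reflectY reflectY = id3"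
  by (simp add: reflectY_def comp3_def subst3.hom_simps id3_def)

lemma diagonal3_reflectY: "diagonal3 (reflectY :: 'a::comm_ring_1 pmap3)"
  unfolding diagonal3_def reflectY_def
  by (rule exI[of _ 1], rule exI[of _ "-1"], rule exI[of _ 1])
    (simp add: const3.hom_one const3.hom_uminus)

lemma nagata_flow_0: "nagata_flow 0 = id3"
  by (simp add: nagata_flow_def id3_def const3.hom_zero)

lemma nagata_flow_1: "nagata_flow 1 = nagata"
  by (simp add: nagata_flow_def nagata_def const3.hom_one)

lemma (in normal) commutator_closed:
  assumes "d \<in> H" and "a \<in> carrier G"
  shows "d \<otimes> a \<otimes> inv d \<otimes> inv a \<in> H"
proof -
  have d: "d \<in> carrier G" "inv d \<in> H"
    using assms(1) subset by auto
  have "a \<otimes> inv d \<otimes> inv a \<in> H"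
    using inv_op_closed2[OF assms(2) d(2)] .
  with assms(1) have "d \<otimes> (a \<otimes> inv d \<otimes> inv a) \<in> H"
    by (rule subgroup.m_closed[OF subgroup_axioms])
  then show ?thesis
    using d assms(2) by (simp add: m_assoc)
qed

lemma GA3_mult [simp]: "x \<otimes>\<^bsub>GA3\<^esub> y = comp3 x y"
  by (simp add: GA3_def)

lemma GA3_one [simp]: "\<one>\<^bsub>GA3\<^esub> = id3"
  by (simp add: GA3_def)

lemma GA3_inv:
  fixes G H :: "'a::comm_ring_1 pmap3"
  assumes "group (GA3 :: 'a pmap3 monoid)" and "comp3 G H = id3" and "comp3 H G = id3"
  shows "G \<in> carrier GA3" and "inv\<^bsub>GA3\<^esub> G = H"
proof -
  interpret group "GA3 :: 'a pmap3 monoid" by (rule assms(1))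
  have G: "G \<in> carrier GA3" and H: "H \<in> carrier GA3"
    using assms(2,3) unfolding GA3_def by (auto simp del: split_paired_Ex)
  show "G \<in> carrier GA3"
    by (rule G)
  show "inv\<^bsub>GA3\<^esub> G = H"
    using assms(3) G H by (intro inv_equality) simp_all
qed

theorem mainTheorem4:
  fixes N :: "'a::field_char_0 pmap3 set"
  assumes "N \<lhd> (GA3 :: 'a pmap3 monoid)"
    and "\<forall>G. diagonal3 G \<longrightarrow> G \<in> N"
  shows "(nagata :: 'a pmap3) \<in> N"
proof -
  interpret normal N "GA3 :: 'a pmap3 monoid" by (rule assms(1))
  define t :: 'a where "t = 1 / 2"
  have "comp3 (nagata_flow (- t)) (nagata_flow t) = id3"
    and "comp3 (nagata_flow t) (nagata_flow (- t)) = id3"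
    by (simp_all add: nagata_flow_add nagata_flow_0)
  note flow = GA3_inv[OF is_group this]
  have refl: "reflectY \<in> N"
    using assms(2) diagonal3_reflectY by blast
  have inv_refl: "inv\<^bsub>GA3\<^esub> (reflectY :: 'a pmap3) = reflectY"
    by (rule GA3_inv(2)[OF is_group reflectY_involution reflectY_involution])
  let ?c = "reflectY \<otimes>\<^bsub>GA3\<^esub> nagata_flow (- t) \<otimes>\<^bsub>GA3\<^esub> inv\<^bsub>GA3\<^esub> reflectY
      \<otimes>\<^bsub>GA3\<^esub> inv\<^bsub>GA3\<^esub> nagata_flow (- t)"
  have "?c \<in> N"
    using refl flow(1) by (rule commutator_closed)
  moreover have "?c = comp3 (nagata_flow t) (nagata_flow t)"
    by (simp add: inv_refl flow(2) reflectY_conj_nagata_flow)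
  moreover have "\<dots> = nagata"
    by (simp add: nagata_flow_add t_def flip: nagata_flow_1)
  ultimately show ?thesis
    by simp
qed

end
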